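(* Let $\mathbb{K}\in\{\mathbb{R},\mathbb{C}\}$, $F$ a locally convex topological $\mathbb{K}$-vector space, $E$ a topological $\mathbb{K}$-vector space, $U\subseteq E$ open and $\sigma\in\,]0,1]$. Let $W\subseteq\mathbb{K}$ be an open neighbourhood of $[0,1]$ and $h\colon U\times W\to F$ a $C^{1,\sigma}_{MB}$-map. Suppose that the weak integral $g(x):=\int_0^1h(x,t)\,dt$ exists in $F$ for each $x\in U$ and defines a map $g\colon U\to F$ which is $C^{1,\sigma}_{MB}$. Then the weak integral $\int_0^1 d_1h(x,y,t)\,dt$ exists in $F$ for all $x\in U$ and $y\in E$, and $\int_0^1 d_1h(x,y,t)\,dt=dg(x,y)$, where $d_1h(x,y,t):=d(h(\cdot,t))(x,y)$.
   Context: Vector spaces Hausdorff; usual absolute value on $\mathbb{K}$. Gauge on a topological $\mathbb{K}$-vector space $X$: $q\colon X\to[0,\infty[$ with $q(tx)=|t|q(x)$ and each $\{q<r\}$ a $0$-neighbourhood. A map $\phi$ on a subset $V\subseteq X$ is $C^{0,\sigma}$ if for every $x_0\in V$ and gauge $q$ on the target there exist a gauge $p$ on $X$ and a neighbourhood $V_0$ of $x_0$ in $V$ with $q(\phi(y)-\phi(x))\le p(y-x)^\sigma$ for $x,y\in V_0$. For $\phi$ on an open subset $V$ of $X$: $\phi$ is $C^{1,\sigma}_{MB}$ if $\phi$ is $C^{0,\sigma}$, the directional derivative $d\phi(x,y):=\frac{d}{dt}\big|_{t=0}\phi(x+ty)$ ($t\in\mathbb{K}$) exists for all $x\in V$, $y\in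 X$, and $d\phi\colon V\times X\to F$ is $C^{0,\sigma}$. Here $U\times W$ is open in $E\times\mathbb{K}$. Weak integral: for continuous $\gamma\colon[0,1]\to F$, $z\in F$ is the weak integral $\int_0^1\gamma(t)\,dt$ if $\lambda(z)=\int_0^1\lambda(\gamma(t))\,dt$ for every continuous linear $\lambda\colon F\to\mathbb{K}$. *)

theory Defs
  imports "HOL-Analysis.Analysis"
begin

text \<open>A complete real normed
 field is (isometrically) R or C, with the usual absolute value given by norm.
 A K-vector space is a type with addition, a topology (Hausdorff by the class t2_space)
 and an explicit scalar multiplication sm.\<close>

definition tvs :: "('k::real_normed_field \<Rightarrow> 'a::{ab_group_add,t2_space} \<Rightarrow> 'a) \<Rightarrow> bool" where
  "tvs sm \<longleftrightarrow>
     (\<forall>a x y. sm a (x + y) = sm a x + sm a y) \<and>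
     (\<forall>a b x. sm (a + b) x = sm a x + sm b x) \<and>
     (\<forall>a b x. sm a (sm b x) = sm (a * b) x) \<and>
     (\<forall>x. sm 1 x = x) \<and>
     continuous_on UNIV (\<lambda>p::'a \<times> 'a. fst p + snd p) \<and>
     continuous_on UNIV (\<lambda>p::'k \<times> 'a. sm (fst p) (snd p))"

definition convex_wrt :: "('k::real_normed_field \<Rightarrow> 'a::ab_group_add \<Rightarrow> 'a) \<Rightarrow> 'a set \<Rightarrow> bool" where
  "convex_wrt sm C \<longleftrightarrow>
     (\<forall>x\<in>C. \<forall>y\<in>C. \<forall>t::real\<in>{0..1}. sm (of_real t) x + sm (of_real (1 - t)) y \<in> C)"

definition locally_convex :: "('k::real_normed_field \<Rightarrow> 'a::{ab_group_add,topological_space} \<Rightarrow> 'a) \<Rightarrow> bool" where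
  "locally_convex sm \<longleftrightarrow>
     (\<forall>N. open N \<and> 0 \<in> N \<longrightarrow> (\<exists>C. open C \<and> 0 \<in> C \<and> C \<subseteq> N \<and> convex_wrt sm C))"

definition gauge_on :: "('k::real_normed_field \<Rightarrow> 'a::{ab_group_add,topological_space} \<Rightarrow> 'a) \<Rightarrow> ('a \<Rightarrow> real) \<Rightarrow> bool" where
  "gauge_on sm q \<longleftrightarrow>
     (\<forall>x. 0 \<le> q x) \<and> (\<forall>t x. q (sm t x) = norm t * q x) \<and>
     (\<forall>r>0. \<exists>S. open S \<and> 0 \<in> S \<and> S \<subseteq> {x. q x < r})"

definition C0sigma ::
  "('k::real_normed_field \<Rightarrow> 'a::{ab_group_add,topological_space} \<Rightarrow> 'a) \<Rightarrow>
   ('k \<Rightarrow> 'b::{ab_group_add,topological_space} \<Rightarrow> 'b) \<Rightarrow> real \<Rightarrow> 'a set \<Rightarrow> ('a \<Rightarrow> 'b) \<Rightarrow> bool" where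
  "C0sigma smX smY \<sigma> V \<phi> \<longleftrightarrow>
     (\<forall>x0\<in>V. \<forall>q. gauge_on smY q \<longrightarrow>
        (\<exists>p N. gauge_on smX p \<and> open N \<and> x0 \<in> N \<and>
           (\<forall>x\<in>N \<inter> V. \<forall>y\<in>N \<inter> V. q (\<phi> y - \<phi> x) \<le> p (y - x) powr \<sigma>)))"

definition has_dir_deriv ::
  "('k::real_normed_field \<Rightarrow> 'a::{ab_group_add,topological_space} \<Rightarrow> 'a) \<Rightarrow>
   ('k \<Rightarrow> 'b::{ab_group_add,topological_space} \<Rightarrow> 'b) \<Rightarrow> ('a \<Rightarrow> 'b) \<Rightarrow> 'a \<Rightarrow> 'a \<Rightarrow> 'b \<Rightarrow> bool" where
  "has_dir_deriv smX smY \<phi> x y v \<longleftrightarrow>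
     ((\<lambda>t. smY (inverse t) (\<phi> (x + smX t y) - \<phi> x)) \<longlongrightarrow> v) (at 0)"

definition dd ::
  "('k::real_normed_field \<Rightarrow> 'a::{ab_group_add,topological_space} \<Rightarrow> 'a) \<Rightarrow>
   ('k \<Rightarrow> 'b::{ab_group_add,topological_space} \<Rightarrow> 'b) \<Rightarrow> ('a \<Rightarrow> 'b) \<Rightarrow> 'a \<Rightarrow> 'a \<Rightarrow> 'b" where
  "dd smX smY \<phi> x y = (THE v. has_dir_deriv smX smY \<phi> x y v)"

definition sm_prod :: "('k \<Rightarrow> 'a \<Rightarrow> 'a) \<Rightarrow> ('k \<Rightarrow> 'b \<Rightarrow> 'b) \<Rightarrow> 'k \<Rightarrow> 'a \<times> 'b \<Rightarrow> 'a \<times> 'b" where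
  "sm_prod sm1 sm2 t p = (sm1 t (fst p), sm2 t (snd p))"

definition C1sigmaMB ::
  "('k::real_normed_field \<Rightarrow> 'a::{ab_group_add,topological_space} \<Rightarrow> 'a) \<Rightarrow>
   ('k \<Rightarrow> 'b::{ab_group_add,topological_space} \<Rightarrow> 'b) \<Rightarrow> real \<Rightarrow> 'a set \<Rightarrow> ('a \<Rightarrow> 'b) \<Rightarrow> bool" where
  "C1sigmaMB smX smY \<sigma> V \<phi> \<longleftrightarrow>
     C0sigma smX smY \<sigma> V \<phi> \<and>
     (\<forall>x\<in>V. \<forall>y. \<exists>v. has_dir_deriv smX smY \<phi> x y v) \<and>
     C0sigma (sm_prod smX smX) smY \<sigma> (V \<times> UNIV) (\<lambda>p. dd smX smY \<phi> (fst p) (snd p))"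

definition cont_linear_functional ::
  "('k::real_normed_field \<Rightarrow> 'a::{ab_group_add,topological_space} \<Rightarrow> 'a) \<Rightarrow> ('a \<Rightarrow> 'k) \<Rightarrow> bool" where
  "cont_linear_functional sm lam \<longleftrightarrow>
     (\<forall>x y. lam (x + y) = lam x + lam y) \<and> (\<forall>t x. lam (sm t x) = t * lam x) \<and>
     continuous_on UNIV lam"

definition weak_integral ::
  "('k::{real_normed_field,banach} \<Rightarrow> 'a::{ab_group_add,topological_space} \<Rightarrow> 'a) \<Rightarrow> (real \<Rightarrow> 'a) \<Rightarrow> 'a \<Rightarrow> bool" where
  "weak_integral sm \<gamma> z \<longleftrightarrow>
     (\<forall>lam. cont_linear_functional sm lam \<longrightarrow> ((\<lambda>t. lam (\<gamma> t)) has_integral lam z) {0..1})"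

end

theory Submission
  imports Defs
begin

(* Fix x, y and a continuous linear functional lam; everything then reduces to scalar calculus
   along the segment s \<mapsto> x + s y. The scalar function (s, t) \<mapsto> lam (h (x + s y, t)) is
   differentiable in s with derivative lam (d\<^sub>1h (x + s y, y, t)), and this derivative is jointly
   continuous: the C^{0,sigma} estimate for dh, tested on the gauge |lam|, is a modulus of
   continuity. The classical Leibniz rule then differentiates
   s \<mapsto> integral over t of lam (h (x + s y, t)) = lam (g (x + s y)) at s = 0, and comparing with the
   directional derivative of g gives lam (dg (x, y)) = integral over t of lam (d\<^sub>1h (x, y, t)). *)

lemma tvs_scale_add: "tvs sm \<Longrightarrow> sm (a + b) x = sm a x + sm b x"
  unfolding tvs_def by blast

lemma tvs_scale_zero: "tvs sm \<Longrightarrow> sm 0 x = 0"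
  using tvs_scale_add[of sm 0 0 x] by simp

lemma tvs_continuous_on_add:
  fixes sm :: "'k::real_normed_field \<Rightarrow> 'a::{ab_group_add,t2_space} \<Rightarrow> 'a"
    and f g :: "'s::topological_space \<Rightarrow> 'a"
  assumes "tvs sm" and "continuous_on S f" and "continuous_on S g"
  shows "continuous_on S (\<lambda>s. f s + g s)"
proof -
  have "continuous_on UNIV (\<lambda>p::'a \<times> 'a. fst p + snd p)"
    using assms(1) unfolding tvs_def by blast
  from continuous_on_compose2[OF this continuous_on_Pair[OF assms(2,3)]] show ?thesis by simp
qed

lemma tvs_continuous_on_scale:
  fixes sm :: "'k::real_normed_field \<Rightarrow> 'a::{ab_group_add,t2_space} \<Rightarrow> 'a"
    and a :: "'s::topological_space \<Rightarrow> 'k" and f :: "'s \<Rightarrow> 'a"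
  assumes "tvs sm" and "continuous_on S a" and "continuous_on S f"
  shows "continuous_on S (\<lambda>s. sm (a s) (f s))"
proof -
  have "continuous_on UNIV (\<lambda>p::'k \<times> 'a. sm (fst p) (snd p))"
    using assms(1) unfolding tvs_def by blast
  from continuous_on_compose2[OF this continuous_on_Pair[OF assms(2,3)]] show ?thesis by simp
qed

lemma tvs_continuous_on_line:
  fixes sm :: "'k::real_normed_field \<Rightarrow> 'a::{ab_group_add,t2_space} \<Rightarrow> 'a"
    and a :: "'s::topological_space \<Rightarrow> 'k"
  assumes "tvs sm" and "continuous_on S a"
  shows "continuous_on S (\<lambda>s. x + sm (a s) y)"
  by (intro tvs_continuous_on_add[OF assms(1)] tvs_continuous_on_scale[OF assms(1)] assms(2)
      continuous_on_const)

lemma tvs_line_in_open: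
  fixes sm :: "'k::real_normed_field \<Rightarrow> 'a::{ab_group_add,t2_space} \<Rightarrow> 'a"
  assumes tvs: "tvs sm" and "open U" and "x \<in> U"
  obtains \<delta> where "\<delta> > 0" and "\<And>s. \<bar>s\<bar> \<le> \<delta> \<Longrightarrow> x + sm (of_real s) y \<in> U"
proof -
  have "continuous_on UNIV (\<lambda>s::real. x + sm (of_real s) y)"
    by (intro tvs_continuous_on_line[OF tvs] continuous_intros)
  then have "open ((\<lambda>s::real. x + sm (of_real s) y) -` U)"
    by (rule open_vimage[OF \<open>open U\<close>])
  moreover have "0 \<in> (\<lambda>s::real. x + sm (of_real s) y) -` U"
    using \<open>x \<in> U\<close> tvs_scale_zero[OF tvs] by simp
  ultimately obtain e where "e > 0" and "ball 0 e \<subseteq> (\<lambda>s::real. x + sm (of_real s) y) -` U"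
    using open_contains_ball by blast
  then show ?thesis
    by (intro that[of "e/2"]) (auto simp: subset_iff)
qed

lemma tvs_mult: "tvs ((*) :: 'k::real_normed_field \<Rightarrow> 'k \<Rightarrow> 'k)"
  unfolding tvs_def by (auto simp: algebra_simps intro!: continuous_intros)

lemma tvs_sm_prod:
  fixes sm1 :: "'k::real_normed_field \<Rightarrow> 'a::{ab_group_add,t2_space} \<Rightarrow> 'a"
    and sm2 :: "'k \<Rightarrow> 'b::{ab_group_add,t2_space} \<Rightarrow> 'b"
  assumes tvs1: "tvs sm1" and tvs2: "tvs sm2"
  shows "tvs (sm_prod sm1 sm2)"
proof -
  have "continuous_on UNIV (\<lambda>p::('a \<times> 'b) \<times> ('a \<times> 'b). fst p + snd p)"
    unfolding plus_prod_def
    by (intro continuous_on_Pair tvs_continuous_on_add[OF tvs1] tvs_continuous_on_add[OF tvs2]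
        continuous_intros)
  moreover have "continuous_on UNIV (\<lambda>p::'k \<times> ('a \<times> 'b). sm_prod sm1 sm2 (fst p) (snd p))"
    unfolding sm_prod_def
    by (intro continuous_on_Pair tvs_continuous_on_scale[OF tvs1] tvs_continuous_on_scale[OF tvs2]
        continuous_intros)
  ultimately show ?thesis
    using tvs1 tvs2 unfolding tvs_def by (simp add: sm_prod_def)
qed

lemma clf_zero: "cont_linear_functional sm lam \<Longrightarrow> lam 0 = 0"
  unfolding cont_linear_functional_def by (metis add_cancel_left_left add_0)

lemma clf_diff: "cont_linear_functional sm lam \<Longrightarrow> lam (a - b) = lam a - lam b"
  unfolding cont_linear_functional_def by (metis add_diff_cancel diff_add_cancel)

lemma clf_isCont: "cont_linear_functional sm lam \<Longrightarrow> isCont lam z"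
  unfolding cont_linear_functional_def by (simp add: continuous_on_eq_continuous_at)

lemma clf_gauge:
  assumes "cont_linear_functional sm lam"
  shows "gauge_on sm (\<lambda>z. norm (lam z))"
  unfolding gauge_on_def
proof (intro conjI allI impI)
  fix t x show "norm (lam (sm t x)) = norm t * norm (lam x)"
    using assms unfolding cont_linear_functional_def by (simp add: norm_mult)
next
  fix r :: real assume "r > 0"
  have "open (lam -` ball 0 r)"
    using assms unfolding cont_linear_functional_def by (intro open_vimage) auto
  moreover have "0 \<in> lam -` ball 0 r" using clf_zero[OF assms] \<open>r > 0\<close> by simp
  ultimately show "\<exists>S. open S \<and> 0 \<in> S \<and> S \<subseteq> {x. norm (lam x) < r}" by fastforce
qed auto

lemma C0sigma_continuous_on_functional:
  fixes smX :: "'k::real_normed_field \<Rightarrow> 'a::{ab_group_add,t2_space} \<Rightarrow> 'a"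
  assumes C0: "C0sigma smX smY \<sigma> V \<phi>" and "0 < \<sigma>" and tvs: "tvs smX"
    and lam: "cont_linear_functional smY lam"
  shows "continuous_on V (\<lambda>x. lam (\<phi> x))"
  unfolding continuous_on_def
proof (intro ballI tendstoI)
  fix x0 and e :: real assume "x0 \<in> V" and "0 < e"
  obtain p N where p: "gauge_on smX p" and N: "open N" "x0 \<in> N"
    and hoelder: "\<And>x. x \<in> N \<inter> V \<Longrightarrow> norm (lam (\<phi> x - \<phi> x0)) \<le> p (x - x0) powr \<sigma>"
    using C0 \<open>x0 \<in> V\<close> clf_gauge[OF lam] unfolding C0sigma_def by (metis IntI)
  have "0 < e powr (1/\<sigma>)" using \<open>0 < e\<close> by simp
  then obtain S where S: "open S" "0 \<in> S" "S \<subseteq> {w. p w < e powr (1/\<sigma>)}"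
    using p unfolding gauge_on_def by blast
  have "open ((\<lambda>x. x + - x0) -` S)"
    by (intro open_vimage S(1) tvs_continuous_on_add[OF tvs] continuous_intros)
  then have "open (N \<inter> (\<lambda>x. x - x0) -` S)"
    using N(1) by (simp add: open_Int)
  moreover have "x0 \<in> N \<inter> (\<lambda>x. x - x0) -` S" using N(2) S(2) by simp
  moreover have "dist (lam (\<phi> x)) (lam (\<phi> x0)) < e" if "x \<in> N \<inter> (\<lambda>x. x - x0) -` S" "x \<in> V" for x
  proof -
    have "dist (lam (\<phi> x)) (lam (\<phi> x0)) = norm (lam (\<phi> x - \<phi> x0))"
      by (simp add: dist_norm clf_diff[OF lam])
    also have "\<dots> \<le> p (x - x0) powr \<sigma>" using hoelder that by blast
    also have "\<dots> < (e powr (1/\<sigma>)) powr \<sigma>"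
      using that S(3) p \<open>0 < \<sigma>\<close> by (intro powr_less_mono2) (auto simp: gauge_on_def)
    also have "\<dots> = e" using \<open>0 < e\<close> \<open>0 < \<sigma>\<close> by (simp add: powr_powr)
    finally show ?thesis .
  qed
  ultimately show "\<forall>\<^sub>F x in at x0 within V. dist (lam (\<phi> x)) (lam (\<phi> x0)) < e"
    unfolding eventually_at_topological by blast
qed

lemma C1sigmaMB_continuous_on_dd:
  fixes smX :: "'k::real_normed_field \<Rightarrow> 'a::{ab_group_add,t2_space} \<Rightarrow> 'a"
  assumes "C1sigmaMB smX smY \<sigma> V \<phi>" and "0 < \<sigma>" and "tvs smX"
    and "cont_linear_functional smY lam"
  shows "continuous_on V (\<lambda>x. lam (dd smX smY \<phi> x w))"
proof -
  have "continuous_on (V \<times> UNIV) (\<lambda>p. lam (dd smX smY \<phi> (fst p) (snd p)))"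
    using assms
    by (intro C0sigma_continuous_on_functional[where smX = "sm_prod smX smX"] tvs_sm_prod)
       (auto simp: C1sigmaMB_def)
  from continuous_on_compose2[OF this continuous_on_Pair[OF continuous_on_id continuous_on_const]]
  show ?thesis by auto
qed

lemma dd_eqI:
  fixes smY :: "'k::real_normed_field \<Rightarrow> 'b::{ab_group_add,t2_space} \<Rightarrow> 'b"
  assumes "has_dir_deriv smX smY \<phi> x y v"
  shows "dd smX smY \<phi> x y = v"
proof -
  have "w = v" if "has_dir_deriv smX smY \<phi> x y w" for w
    using that assms unfolding has_dir_deriv_def by (intro tendsto_unique[OF at_neq_bot])
  then show ?thesis
    unfolding dd_def using assms by blast
qed

lemma dd_partial: "dd smE smF (\<lambda>z. h (z, t)) x y = dd (sm_prod smE (*)) smF h (x, t) (y, 0)"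
  unfolding dd_def has_dir_deriv_def sm_prod_def by simp

lemma has_dir_deriv_functional_field_derivative:
  fixes smY :: "'k::real_normed_field \<Rightarrow> 'b::{ab_group_add,t2_space} \<Rightarrow> 'b"
  assumes tvs: "tvs smX" and "has_dir_deriv smX smY \<phi> x y v"
    and lam: "cont_linear_functional smY lam"
  shows "((\<lambda>t. lam (\<phi> (x + smX t y))) has_field_derivative lam v) (at 0)"
proof -
  have "((\<lambda>t. lam (smY (inverse t) (\<phi> (x + smX t y) - \<phi> x))) \<longlongrightarrow> lam v) (at 0)"
    using assms(2) unfolding has_dir_deriv_def by (rule isCont_tendsto_compose[OF clf_isCont[OF lam]])
  moreover have "lam (smY (inverse t) (\<phi> (x + smX t y) - \<phi> x))
      = (lam (\<phi> (x + smX t y)) - lam (\<phi> (x + smX 0 y))) / (t - 0)" for t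
    using lam tvs_scale_zero[OF tvs]
    by (simp add: cont_linear_functional_def clf_diff[OF lam] divide_inverse mult.commute)
  ultimately show ?thesis
    unfolding has_field_derivative_iff by simp
qed

lemma has_dir_deriv_line_vector_derivative:
  fixes smY :: "'k::real_normed_field \<Rightarrow> 'b::{ab_group_add,t2_space} \<Rightarrow> 'b"
  assumes tvs: "tvs smX" and "has_dir_deriv smX smY \<phi> (x + smX (of_real r) y) y v"
    and lam: "cont_linear_functional smY lam"
  shows "((\<lambda>s. lam (\<phi> (x + smX (of_real s) y))) has_vector_derivative lam v) (at r)"
proof -
  have shift: "((\<lambda>s::real. of_real (s - r) :: 'k) has_vector_derivative 1) (at r)"
    by (auto intro!: derivative_eq_intros)
  have "((\<lambda>t. lam (\<phi> (x + smX (of_real r) y + smX t y))) has_field_derivative lam v)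
      (at ((\<lambda>s::real. of_real (s - r) :: 'k) r))"
    using has_dir_deriv_functional_field_derivative[OF assms] by simp
  from field_vector_diff_chain_at[OF shift this]
  show ?thesis
    by (simp add: o_def add.assoc flip: tvs_scale_add[OF tvs] of_real_add)
qed

lemma C1sigmaMB_line_vector_derivative:
  fixes smY :: "'k::real_normed_field \<Rightarrow> 'b::{ab_group_add,t2_space} \<Rightarrow> 'b"
  assumes tvs: "tvs smX" and C1: "C1sigmaMB smX smY \<sigma> V \<phi>" and "x + smX (of_real r) y \<in> V"
    and lam: "cont_linear_functional smY lam"
  shows "((\<lambda>s. lam (\<phi> (x + smX (of_real s) y))) has_vector_derivative
      lam (dd smX smY \<phi> (x + smX (of_real r) y) y)) (at r)"
proof -
  obtain v where v: "has_dir_deriv smX smY \<phi> (x + smX (of_real r) y) y v"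
    using C1 \<open>x + smX (of_real r) y \<in> V\<close> unfolding C1sigmaMB_def by blast
  show ?thesis
    using has_dir_deriv_line_vector_derivative[OF tvs v lam] by (simp add: dd_eqI[OF v])
qed

lemma C1sigmaMB_partial_vector_derivative:
  fixes smE :: "'k::real_normed_field \<Rightarrow> 'e::{ab_group_add,t2_space} \<Rightarrow> 'e"
    and smF :: "'k \<Rightarrow> 'f::{ab_group_add,t2_space} \<Rightarrow> 'f"
  assumes tvs: "tvs smE" and C1: "C1sigmaMB (sm_prod smE (*)) smF \<sigma> V h"
    and "(x + smE (of_real r) y, \<tau>) \<in> V" and lam: "cont_linear_functional smF lam"
  shows "((\<lambda>s. lam (h (x + smE (of_real s) y, \<tau>))) has_vector_derivative
      lam (dd smE smF (\<lambda>z. h (z, \<tau>)) (x + smE (of_real r) y) y)) (at r)"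
  using C1sigmaMB_line_vector_derivative[OF tvs_sm_prod[OF tvs tvs_mult] C1 _ lam,
      of "(x, \<tau>)" r "(y, 0)"] assms(3)
  by (simp add: sm_prod_def dd_partial)

lemma C1sigmaMB_continuous_on_partial_dd:
  fixes smE :: "'k::real_normed_field \<Rightarrow> 'e::{ab_group_add,t2_space} \<Rightarrow> 'e"
    and smF :: "'k \<Rightarrow> 'f::{ab_group_add,t2_space} \<Rightarrow> 'f"
    and \<gamma> :: "'s::topological_space \<Rightarrow> 'e" and \<tau> :: "'s \<Rightarrow> 'k"
  assumes tvs: "tvs smE" and C1: "C1sigmaMB (sm_prod smE (*)) smF \<sigma> V h" and "0 < \<sigma>"
    and lam: "cont_linear_functional smF lam"
    and "continuous_on S \<gamma>" and "continuous_on S \<tau>" and "\<And>s. s \<in> S \<Longrightarrow> (\<gamma> s, \<tau> s) \<in> V"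
  shows "continuous_on S (\<lambda>s. lam (dd smE smF (\<lambda>z. h (z, \<tau> s)) (\<gamma> s) y))"
proof -
  have "continuous_on V (\<lambda>p. lam (dd (sm_prod smE (*)) smF h p (y, 0)))"
    using C1 \<open>0 < \<sigma>\<close> tvs_sm_prod[OF tvs tvs_mult] lam by (rule C1sigmaMB_continuous_on_dd)
  from continuous_on_compose2[OF this continuous_on_Pair[OF assms(5,6)]] assms(7)
  show ?thesis by (force simp: dd_partial)
qed

lemma has_integral_vector_derivative_under_integral:
  fixes f D :: "real \<Rightarrow> real \<Rightarrow> 'c::banach"
  assumes "\<delta> > 0"
    and deriv: "\<And>s t. s \<in> {-\<delta>..\<delta>} \<Longrightarrow> t \<in> {0..1} \<Longrightarrow>
        ((\<lambda>s. f s t) has_vector_derivative D s t) (at s within {-\<delta>..\<delta>})"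
    and integral: "\<And>s. s \<in> {-\<delta>..\<delta>} \<Longrightarrow> (f s has_integral F s) {0..1}"
    and cont: "continuous_on ({-\<delta>..\<delta>} \<times> {0..1}) (\<lambda>(s, t). D s t)"
    and "(F has_vector_derivative F') (at 0)"
  shows "(D 0 has_integral F') {0..1}"
proof -
  have "((\<lambda>s. integral {0..1} (f s)) has_vector_derivative integral {0..1} (D 0))
      (at 0 within {-\<delta>..\<delta>})"
    using leibniz_rule_vector_derivative[of "{-\<delta>..\<delta>}" 0 1 f D 0] assms
    by (auto simp: has_integral_integrable)
  then have "(F has_vector_derivative integral {0..1} (D 0)) (at 0 within {-\<delta>..\<delta>})"
    by (rule has_vector_derivative_transform[rotated 2])
       (use \<open>\<delta> > 0\<close> integral_unique[OF integral] in auto)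
  moreover have "(F has_vector_derivative F') (at 0 within {-\<delta>..\<delta>})"
    using assms(5) by (rule has_vector_derivative_at_within)
  ultimately have "F' = integral {0..1} (D 0)"
    using \<open>\<delta> > 0\<close> vector_derivative_unique_within_closed_interval[of "-\<delta>" \<delta> 0] by auto
  moreover have "continuous_on {0..1} (\<lambda>t. (\<lambda>(s, t). D s t) (0, t))"
    by (rule continuous_on_compose2[OF cont])
       (use \<open>\<delta> > 0\<close> in \<open>auto intro!: continuous_intros\<close>)
  then have "D 0 integrable_on {0..1}"
    by (simp add: integrable_continuous_real)
  ultimately show ?thesis
    using integrable_integral by simp
qed

lemma functional_dd_has_integral:
  fixes smE :: "'k::{real_normed_field,banach} \<Rightarrow> 'e::{ab_group_add,t2_space} \<Rightarrow> 'e"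
    and smF :: "'k \<Rightarrow> 'f::{ab_group_add,t2_space} \<Rightarrow> 'f"
  assumes tvs: "tvs smE" and "0 < \<sigma>"
    and h: "C1sigmaMB (sm_prod smE (*)) smF \<sigma> V h" and g: "C1sigmaMB smE smF \<sigma> U g"
    and lam: "cont_linear_functional smF lam" and "\<delta> > 0" and "x \<in> U"
    and line: "\<And>s t. s \<in> {-\<delta>..\<delta>} \<Longrightarrow> t \<in> {0..1} \<Longrightarrow>
        (x + smE (of_real s) y, of_real t) \<in> V"
    and integral: "\<And>s. s \<in> {-\<delta>..\<delta>} \<Longrightarrow>
        ((\<lambda>t. lam (h (x + smE (of_real s) y, of_real t))) has_integral
          lam (g (x + smE (of_real s) y))) {0..1}"
  shows "((\<lambda>t. lam (dd smE smF (\<lambda>z. h (z, of_real t)) x y)) has_integral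
      lam (dd smE smF g x y)) {0..1}"
proof -
  define D where "D s t = lam (dd smE smF (\<lambda>z. h (z, of_real t)) (x + smE (of_real s) y) y)"
    for s t :: real
  have "(D 0 has_integral lam (dd smE smF g x y)) {0..1}"
  proof (rule has_integral_vector_derivative_under_integral[OF \<open>\<delta> > 0\<close>, where D = D
        and f = "\<lambda>s t. lam (h (x + smE (of_real s) y, of_real t))"
        and F = "\<lambda>s. lam (g (x + smE (of_real s) y))"])
    fix s t :: real assume "s \<in> {-\<delta>..\<delta>}" and "t \<in> {0..1}"
    then show "((\<lambda>s. lam (h (x + smE (of_real s) y, of_real t))) has_vector_derivative D s t)
        (at s within {-\<delta>..\<delta>})"
      unfolding D_def using line
      by (intro has_vector_derivative_at_within
          [OF C1sigmaMB_partial_vector_derivative[OF tvs h _ lam]]) auto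
  next
    show "continuous_on ({-\<delta>..\<delta>} \<times> {0..1}) (\<lambda>(s, t). D s t)"
      unfolding D_def case_prod_unfold
      by (rule C1sigmaMB_continuous_on_partial_dd[OF tvs h \<open>0 < \<sigma>\<close> lam])
         (auto intro!: tvs_continuous_on_line[OF tvs] continuous_intros line)
  next
    show "((\<lambda>s. lam (g (x + smE (of_real s) y))) has_vector_derivative
        lam (dd smE smF g x y)) (at 0)"
      using C1sigmaMB_line_vector_derivative[OF tvs g _ lam, of x 0 y] \<open>x \<in> U\<close>
      by (simp add: tvs_scale_zero[OF tvs])
  qed (rule integral)
  then show ?thesis
    by (simp add: D_def[abs_def] tvs_scale_zero[OF tvs])
qed

theorem lemmaC6:
  fixes smE :: "'k::{real_normed_field,banach} \<Rightarrow> 'e::{ab_group_add,t2_space} \<Rightarrow> 'e"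
    and smF :: "'k \<Rightarrow> 'f::{ab_group_add,t2_space} \<Rightarrow> 'f"
    and U :: "'e set" and W :: "'k set" and \<sigma> :: real
    and h :: "'e \<times> 'k \<Rightarrow> 'f" and g :: "'e \<Rightarrow> 'f"
  assumes "tvs smE" and "tvs smF" and "locally_convex smF"
    and "open U" and "0 < \<sigma>" and "\<sigma> \<le> 1"
    and "open W" and "of_real ` {0..1::real} \<subseteq> W"
    and "C1sigmaMB (sm_prod smE (*)) smF \<sigma> (U \<times> W) h"
    and "\<forall>x\<in>U. weak_integral smF (\<lambda>t. h (x, of_real t)) (g x)"
    and "C1sigmaMB smE smF \<sigma> U g"
  shows "\<forall>x\<in>U. \<forall>y. weak_integral smF (\<lambda>t. dd smE smF (\<lambda>z. h (z, of_real t)) x y) (dd smE smF g x y)"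
proof (intro ballI allI)
  fix x y assume "x \<in> U"
  obtain \<delta> where "\<delta> > 0" and line: "\<And>s. \<bar>s\<bar> \<le> \<delta> \<Longrightarrow> x + smE (of_real s) y \<in> U"
    using tvs_line_in_open[OF assms(1,4) \<open>x \<in> U\<close>] by blast
  show "weak_integral smF (\<lambda>t. dd smE smF (\<lambda>z. h (z, of_real t)) x y) (dd smE smF g x y)"
    unfolding weak_integral_def
  proof (intro allI impI)
    fix lam assume lam: "cont_linear_functional smF lam"
    show "((\<lambda>t. lam (dd smE smF (\<lambda>z. h (z, of_real t)) x y)) has_integral
        lam (dd smE smF g x y)) {0..1}"
      by (rule functional_dd_has_integral[OF assms(1,5,9,11) lam \<open>\<delta> > 0\<close> \<open>x \<in> U\<close>])
         (use line assms(8,10) lam in \<open>auto simp: weak_integral_def\<close>)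
  qed
qed

end
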